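(* Let $f:[0,\infty)\to(0,\infty)$ be continuous and non-increasing with $\lim_{u\to\infty}f(au)/f(u)=0$ for all $a>1$ and $\int_{\mathbb R^k}f(u'u)\,du<\infty$. For $c>0$ let $\pi_{\eta,c}(\eta\mid\theta)=f(\tfrac1c\eta'W(P)\eta)/Z_c(P)$ with $Z_c(P)=\int f(\tfrac1c\eta'W(P)\eta)\,d\eta$. Let $\pi^*_\eta(\eta\mid\theta)$ be any conditional probability density on $\mathbb R^k$ that is strictly positive, let $\phi\in(0,1)$, and define the mixture \[ \pi^\phi_{\eta,c}(\eta\mid\theta)=(1-\phi)\pi_{\eta,c}(\eta\mid\theta)+\phi\,\pi^*_\eta(\eta\mid\theta). \] Given a prior density $\pi_\theta$ on $\mathbb R^p$, let \[ \pi_c^\phi(\theta\mid P)=\frac{\pi_\theta(\theta)\,\pi^\phi_{\eta,c}(Y(P)-X(P)\theta\mid\theta)}{\int\pi_\theta(\vartheta)\,\pi^\phi_{\eta,c}(Y(P)-X(P)\vartheta\mid\vartheta)\,d\vartheta}. \] (1) If $J_W(P)>0$, then for any $\pi_\theta$ and every $\theta$, \[ \lim_{c\to0}\pi^\phi_c(\theta\mid P)=\frac{\pi_\theta(\theta)\,\pi^*_\eta(Y(P)-X(P)\theta\mid\theta)}{\int\pi_\theta(\vartheta)\,\pi^*_\eta(Y(P)-X(P)\vartheta\mid\vartheta)\,d\vartheta}. \] (2) If instead $J_W(P)=0$, $\pi_\theta$ is continuous and $\pi_\theta(\theta_W(P))>0$, then for every $\varepsilon>0$, \[ \lim_{c\to0}\int1\{\|\theta-\theta_W(P)\|\ge\varepsilon\}\,d\pi^\phi_c(\theta\mid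 P)=0. \]
   Context: Let $\mathcal P$ be a set of probability distributions; $P\in\mathcal P$ is observed. Fix integers $k>p\ge1$. $Y(P)\in\mathbb R^k$, $X(P)\in\mathbb R^{k\times p}$ of full column rank, and a symmetric positive definite $k\times k$ matrix $W(P)$ are known. Define $Q_W(\theta;P)=(Y(P)-X(P)\theta)'W(P)(Y(P)-X(P)\theta)$, the population $J$-statistic $J_W(P)=\min_\theta Q_W(\theta;P)$, and the pseudo-true value $\theta_W(P)=(X(P)'W(P)X(P))^{-1}X(P)'W(P)Y(P)$. Here $\eta=Y(P)-X(P)\theta$ is the misspecification parameter, and $\pi^\phi_c(\cdot\mid P)$ is the posterior for $\theta$ under prior $\pi_\theta$ on $\theta$ and conditional prior $\pi^\phi_{\eta,c}$ on $\eta$. *)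

theory Defs
  imports "HOL-Analysis.Analysis"
begin

definition QW :: "real^'k^'k \<Rightarrow> real^'p^'k \<Rightarrow> real^'k \<Rightarrow> real^'p \<Rightarrow> real" where
  "QW W X Y \<theta> = (Y - X *v \<theta>) \<bullet> (W *v (Y - X *v \<theta>))"

definition JW :: "real^'k^'k \<Rightarrow> real^'p^'k \<Rightarrow> real^'k \<Rightarrow> real" where
  "JW W X Y = (INF \<theta>. QW W X Y \<theta>)"

definition thetaW :: "real^'k^'k \<Rightarrow> real^'p^'k \<Rightarrow> real^'k \<Rightarrow> real^'p" where
  "thetaW W X Y = matrix_inv (transpose X ** W ** X) *v (transpose X *v (W *v Y))"

definition Zc :: "(real \<Rightarrow> real) \<Rightarrow> real^'k^'k \<Rightarrow> real \<Rightarrow> real" where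
  "Zc f W c = (\<integral>\<eta>. f ((1 / c) * (\<eta> \<bullet> (W *v \<eta>))) \<partial>lborel)"

definition pi_eta :: "(real \<Rightarrow> real) \<Rightarrow> real^'k^'k \<Rightarrow> real \<Rightarrow> real^'k \<Rightarrow> real" where
  "pi_eta f W c \<eta> = f ((1 / c) * (\<eta> \<bullet> (W *v \<eta>))) / Zc f W c"

definition pi_eta_mix ::
  "(real \<Rightarrow> real) \<Rightarrow> real^'k^'k \<Rightarrow> (real^'p \<Rightarrow> real^'k \<Rightarrow> real) \<Rightarrow> real \<Rightarrow> real
     \<Rightarrow> real^'p \<Rightarrow> real^'k \<Rightarrow> real" where
  "pi_eta_mix f W pistar \<phi> c \<theta> \<eta> = (1 - \<phi>) * pi_eta f W c \<eta> + \<phi> * pistar \<theta> \<eta>"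

definition posterior ::
  "(real^'p \<Rightarrow> real) \<Rightarrow> (real^'p \<Rightarrow> real^'k \<Rightarrow> real) \<Rightarrow> real^'p^'k \<Rightarrow> real^'k \<Rightarrow> real^'p \<Rightarrow> real" where
  "posterior pitheta pieta X Y \<theta> =
     pitheta \<theta> * pieta \<theta> (Y - X *v \<theta>) /
       (\<integral>t. pitheta t * pieta t (Y - X *v t) \<partial>lborel)"

definition post_c ::
  "(real \<Rightarrow> real) \<Rightarrow> real^'k^'k \<Rightarrow> (real^'p \<Rightarrow> real^'k \<Rightarrow> real) \<Rightarrow> real \<Rightarrow> (real^'p \<Rightarrow> real)
     \<Rightarrow> real^'p^'k \<Rightarrow> real^'k \<Rightarrow> real \<Rightarrow> real^'p \<Rightarrow> real" where
  "post_c f W pistar \<phi> pitheta X Y c = posterior pitheta (pi_eta_mix f W pistar \<phi> c) X Y"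

end

(*
  Rescaling eta = sqrt c * xi gives Z_c = c^(k/2) Z_1, while the kernel f(Q(theta)/c),
  Q = Q_W(.; P), is at most f(J_W/c).  Since f is non-increasing, the integral of f(u'u) over a
  ball of radius sqrt s bounds s^(k/2) f(s); together with f(2s)/f(s) -> 0 this gives
  s^(k/2) f(s) -> 0.  Hence if J_W > 0 the kernel part of the mixture is o(Z_c) uniformly in theta
  and only the pi* part survives in the posterior.

  If J_W = 0 then Y = X theta_W and Q is a positive definite quadratic form in theta - theta_W.
  The kernel mass of the prior is at least of order c^(p/2), from a ball of radius sqrt c around
  theta_W, whereas outside the epsilon-ball both the kernel, at most f(m eps^2 / c), and the weight
  of the pi* part, proportional to Z_c, are O(c^(k/2)).  As p < k the posterior mass outside the
  ball is O(c^((k-p)/2)).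
*)
theory Submission
  imports Defs
begin

lemma nn_integral_lborel_scaleR:
  fixes g :: "'a::euclidean_space \<Rightarrow> ennreal"
  assumes [measurable]: "g \<in> borel_measurable borel" and "s \<noteq> 0"
  shows "(\<integral>\<^sup>+x. g x \<partial>lborel) = ennreal (\<bar>s\<bar> ^ DIM('a)) * (\<integral>\<^sup>+x. g (s *\<^sub>R x) \<partial>lborel)"
  by (subst lborel_affine[OF \<open>s \<noteq> 0\<close>, of 0])
     (simp add: nn_integral_density nn_integral_distr nn_integral_cmult)

lemma nn_integral_ge_ball:
  fixes h :: "'a::euclidean_space \<Rightarrow> real"
  assumes "\<And>u. u \<in> ball c r \<Longrightarrow> a \<le> h u" and "0 \<le> a" and "0 \<le> r"
  shows "ennreal (a * (unit_ball_vol DIM('a) * r ^ DIM('a))) \<le> (\<integral>\<^sup>+u. ennreal (h u) \<partial>lborel)"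
proof -
  have "ennreal (a * (unit_ball_vol DIM('a) * r ^ DIM('a))) = (\<integral>\<^sup>+u. ennreal a * indicator (ball c r) u \<partial>lborel)"
    using assms by (simp add: nn_integral_cmult_indicator emeasure_ball ennreal_mult)
  also have "\<dots> \<le> (\<integral>\<^sup>+u. ennreal (h u) \<partial>lborel)"
    using assms(1) by (intro nn_integral_mono) (auto simp: indicator_def intro: ennreal_leI)
  finally show ?thesis .
qed

lemma integral_ge_ball:
  fixes h :: "'a::euclidean_space \<Rightarrow> real"
  assumes "integrable lborel h" and "\<And>u. 0 \<le> h u"
    and "\<And>u. u \<in> ball c r \<Longrightarrow> a \<le> h u" and "0 \<le> a" and "0 \<le> r"
  shows "a * (unit_ball_vol DIM('a) * r ^ DIM('a)) \<le> integral\<^sup>L lborel h"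
proof -
  have ball: "integrable lborel (indicator (ball c r) :: 'a \<Rightarrow> real)"
    using \<open>0 \<le> r\<close> by (intro integrable_real_indicator) (simp_all add: emeasure_ball)
  have "a * (unit_ball_vol DIM('a) * r ^ DIM('a)) = (\<integral>u. a * indicator (ball c r) u \<partial>lborel)"
    using assms by (simp add: content_ball)
  also have "\<dots> \<le> integral\<^sup>L lborel h"
    using assms by (intro integral_mono integrable_mult_right[OF ball]) (auto simp: indicator_def)
  finally show ?thesis .
qed

lemma sqrt_power_mult_profile_le:
  fixes f :: "real \<Rightarrow> real"
  assumes noninc: "\<And>u v. 0 \<le> u \<Longrightarrow> u \<le> v \<Longrightarrow> f v \<le> f u"
    and nonneg: "\<And>u. 0 \<le> u \<Longrightarrow> 0 \<le> f u"
    and fin: "(\<integral>\<^sup>+u. ennreal (f (u \<bullet> u)) \<partial>(lborel :: 'a::euclidean_space measure)) < \<infinity>"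
    and "0 \<le> s"
  shows "sqrt s ^ DIM('a) * f s
           \<le> enn2real (\<integral>\<^sup>+u. ennreal (f (u \<bullet> u)) \<partial>(lborel :: 'a measure)) / unit_ball_vol DIM('a)"
proof -
  let ?I = "\<integral>\<^sup>+u. ennreal (f (u \<bullet> u)) \<partial>(lborel :: 'a measure)"
  have "ennreal (f s * (unit_ball_vol DIM('a) * sqrt s ^ DIM('a))) \<le> ?I"
  proof (rule nn_integral_ge_ball[where c = 0])
    fix u :: 'a assume "u \<in> ball 0 (sqrt s)"
    then have "u \<bullet> u \<le> s" by (simp add: norm_eq_sqrt_inner)
    then show "f s \<le> f (u \<bullet> u)" by (intro noninc) auto
  qed (use nonneg \<open>0 \<le> s\<close> in auto)
  then have "f s * (unit_ball_vol DIM('a) * sqrt s ^ DIM('a)) \<le> enn2real ?I"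
    using fin enn2real_mono nonneg \<open>0 \<le> s\<close> by fastforce
  then show ?thesis by (simp add: pos_le_divide_eq mult_ac)
qed

lemma sqrt_power_mult_profile_tendsto_0:
  fixes f :: "real \<Rightarrow> real"
  assumes noninc: "\<And>u v. 0 \<le> u \<Longrightarrow> u \<le> v \<Longrightarrow> f v \<le> f u"
    and pos: "\<And>u. 0 \<le> u \<Longrightarrow> 0 < f u"
    and fin: "(\<integral>\<^sup>+u. ennreal (f (u \<bullet> u)) \<partial>(lborel :: 'a::euclidean_space measure)) < \<infinity>"
    and tail: "((\<lambda>u. f (2 * u) / f u) \<longlongrightarrow> 0) at_top"
  shows "((\<lambda>u. sqrt u ^ DIM('a) * f u) \<longlongrightarrow> 0) at_top"
proof (rule Lim_null_comparison)
  define B where "B = enn2real (\<integral>\<^sup>+u. ennreal (f (u \<bullet> u)) \<partial>(lborel :: 'a measure)) / unit_ball_vol DIM('a)"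
  have half: "filterlim (\<lambda>u::real. u / 2) at_top at_top"
    by (rule filterlim_at_top_mult_tendsto_pos[OF tendsto_const _ filterlim_ident, of "1/2", simplified])
  show "((\<lambda>u. sqrt 2 ^ DIM('a) * B * (f (2 * (u / 2)) / f (u / 2))) \<longlongrightarrow> 0) at_top"
    by (intro tendsto_mult_right_zero filterlim_compose[OF tail half])
  show "\<forall>\<^sub>F u in at_top. norm (sqrt u ^ DIM('a) * f u) \<le> sqrt 2 ^ DIM('a) * B * (f (2 * (u / 2)) / f (u / 2))"
    using eventually_ge_at_top[of 0]
  proof eventually_elim
    case (elim u)
    have "sqrt u ^ DIM('a) * f u = sqrt 2 ^ DIM('a) * (f (2 * (u / 2)) / f (u / 2)) * (sqrt (u / 2) ^ DIM('a) * f (u / 2))"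
      using pos[of "u / 2"] elim by (simp add: field_simps real_sqrt_divide power_divide)
    also have "\<dots> \<le> sqrt 2 ^ DIM('a) * (f (2 * (u / 2)) / f (u / 2)) * B"
      unfolding B_def using pos elim
      by (intro mult_left_mono sqrt_power_mult_profile_le[OF noninc _ fin]) (auto intro: less_imp_le)
    finally show ?case using pos[of u] elim by (simp add: abs_of_nonneg mult_ac)
  qed
qed

lemma continuous_on_quadratic_form:
  fixes W :: "real^'n^'n"
  shows "continuous_on S (\<lambda>x. x \<bullet> (W *v x))"
  by (intro continuous_intros linear_continuous_on matrix_vector_mul_bounded_linear)

lemma pos_def_quadratic_form_ge:
  fixes W :: "real^'n^'n"
  assumes pd: "\<And>x. x \<noteq> 0 \<Longrightarrow> 0 < x \<bullet> (W *v x)"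
  obtains l where "0 < l" and "\<And>x. l * (x \<bullet> x) \<le> x \<bullet> (W *v x)"
proof -
  obtain x0 where x0: "x0 \<in> sphere 0 1"
    and min: "\<And>y. y \<in> sphere 0 1 \<Longrightarrow> x0 \<bullet> (W *v x0) \<le> y \<bullet> (W *v y)"
    using continuous_attains_inf[OF compact_sphere _ continuous_on_quadratic_form, of 0 1 W] by auto
  have "x0 \<bullet> (W *v x0) * (x \<bullet> x) \<le> x \<bullet> (W *v x)" for x
  proof (cases "x = 0")
    case False
    define u where "u = (1 / norm x) *\<^sub>R x"
    have "x \<bullet> (W *v x) = (x \<bullet> x) * (u \<bullet> (W *v u))"
      using False by (simp add: u_def matrix_vector_mult_scaleR dot_square_norm power2_eq_square)
    moreover have "x0 \<bullet> (W *v x0) \<le> u \<bullet> (W *v u)"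
      using False by (intro min) (simp add: u_def)
    ultimately show ?thesis by (simp add: mult.commute mult_left_mono)
  qed simp
  moreover have "0 < x0 \<bullet> (W *v x0)" using x0 by (intro pd) auto
  ultimately show thesis using that by blast
qed

lemma quadratic_form_le:
  fixes W :: "real^'n^'n"
  obtains K where "0 < K" and "\<And>x. x \<bullet> (W *v x) \<le> K * (x \<bullet> x)"
proof -
  obtain K where "0 < K" and K: "\<And>x. norm (W *v x) \<le> norm x * K"
    using bounded_linear.pos_bounded[OF matrix_vector_mul_bounded_linear[of W]] by blast
  have "x \<bullet> (W *v x) \<le> K * (x \<bullet> x)" for x
  proof -
    have "x \<bullet> (W *v x) \<le> norm x * norm (W *v x)" by (rule norm_cauchy_schwarz)
    also have "\<dots> \<le> norm x * (norm x * K)" by (simp add: K mult_left_mono)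
    finally show ?thesis by (simp add: dot_square_norm power2_eq_square mult_ac)
  qed
  with \<open>0 < K\<close> show thesis by (rule that)
qed

lemma matrix_inv_left:
  fixes A :: "'a::semiring_1^'n^'n"
  assumes "invertible A"
  shows "matrix_inv A ** A = mat 1"
  using assms unfolding matrix_inv_def invertible_def
  by (rule someI_ex[where P = "\<lambda>B. A ** B = mat 1 \<and> B ** A = mat 1", THEN conjunct2])

lemma quadratic_form_transpose_mult:
  fixes X :: "real^'p^'k" and W :: "real^'k^'k"
  shows "v \<bullet> ((transpose X ** W ** X) *v v) = (X *v v) \<bullet> (W *v (X *v v))"
proof -
  have "(transpose X ** W ** X) *v v = transpose X *v (W *v (X *v v))"
    by (simp add: matrix_vector_mul_assoc[symmetric])
  then show ?thesis
    by (simp only: transpose_matrix_vector) (metis dot_lmul_matrix inner_commute)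
qed

lemma pos_def_transpose_mult:
  fixes X :: "real^'p^'k" and W :: "real^'k^'k"
  assumes "\<And>x. x \<noteq> 0 \<Longrightarrow> 0 < x \<bullet> (W *v x)" and "inj ((*v) X)" and "v \<noteq> 0"
  shows "0 < v \<bullet> ((transpose X ** W ** X) *v v)"
proof -
  have "X *v v \<noteq> 0" using assms(2,3) by (metis injD matrix_vector_mult_0_right)
  then show ?thesis using assms(1) by (simp add: quadratic_form_transpose_mult)
qed

lemma thetaW_fitted:
  fixes X :: "real^'p^'k" and W :: "real^'k^'k"
  assumes pd: "\<And>x. x \<noteq> 0 \<Longrightarrow> 0 < x \<bullet> (W *v x)" and inj: "inj ((*v) X)"
  shows "thetaW W X (X *v t) = t"
proof -
  define A where "A = transpose X ** W ** X"
  have "inj ((*v) A)"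
  proof (rule injI)
    fix u v assume "A *v u = A *v v"
    then have "(u - v) \<bullet> (A *v (u - v)) = 0" by (simp add: matrix_vector_mult_diff_distrib)
    then show "u = v" using pos_def_transpose_mult[OF pd inj, of "u - v"] by (auto simp: A_def)
  qed
  then have "matrix_inv A ** A = mat 1"
    by (simp add: matrix_inv_left invertible_left_inverse matrix_left_invertible_injective)
  moreover have "transpose X *v (W *v (X *v t)) = A *v t"
    by (simp add: A_def matrix_vector_mul_assoc[symmetric])
  ultimately show ?thesis
    by (simp add: thetaW_def A_def[symmetric] matrix_vector_mul_assoc)
qed

lemma continuous_on_QW: "continuous_on S (QW W X Y)"
  unfolding QW_def
  by (intro continuous_intros bounded_linear.continuous_on[OF matrix_vector_mul_bounded_linear])

lemma JW_le_QW:
  fixes W :: "real^'k^'k"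
  assumes "\<And>x. 0 \<le> x \<bullet> (W *v x)"
  shows "JW W X Y \<le> QW W X Y t"
  unfolding JW_def by (rule cINF_lower) (auto intro!: bdd_belowI2[where m = 0] simp: QW_def assms)

lemma JW_nonneg:
  fixes W :: "real^'k^'k"
  assumes "\<And>x. 0 \<le> x \<bullet> (W *v x)"
  shows "0 \<le> JW W X Y"
  unfolding JW_def by (rule cINF_greatest) (auto simp: QW_def assms)

lemma JW_eq_0_imp_in_range:
  fixes X :: "real^'p^'k" and W :: "real^'k^'k"
  assumes pd: "\<And>x. x \<noteq> 0 \<Longrightarrow> 0 < x \<bullet> (W *v x)" and J: "JW W X Y = 0"
  shows "Y \<in> range ((*v) X)"
proof (rule ccontr)
  let ?R = "range ((*v) X)"
  assume "Y \<notin> ?R"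
  moreover have "closed ?R"
    by (intro closed_subspace linear_subspace_image subspace_UNIV) simp
  ultimately have d: "0 < infdist Y ?R" by (intro infdist_pos_not_in_closed) auto
  obtain l where l: "0 < l" "\<And>x. l * (x \<bullet> x) \<le> x \<bullet> (W *v x)"
    using pos_def_quadratic_form_ge[OF pd] by blast
  have "l * (infdist Y ?R)\<^sup>2 \<le> QW W X Y t" for t
  proof -
    have "infdist Y ?R \<le> norm (Y - X *v t)" using infdist_le[of "X *v t" ?R Y] by (simp add: dist_norm)
    then have "(infdist Y ?R)\<^sup>2 \<le> (Y - X *v t) \<bullet> (Y - X *v t)"
      using d by (simp add: dot_square_norm power_mono)
    then show ?thesis unfolding QW_def using l by (meson mult_left_mono less_imp_le order_trans)
  qed
  then have "l * (infdist Y ?R)\<^sup>2 \<le> JW W X Y" unfolding JW_def by (intro cINF_greatest) auto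
  then show False using J l d by (simp add: mult_le_0_iff)
qed

lemma QW_eq_quadratic_form_thetaW:
  fixes X :: "real^'p^'k" and W :: "real^'k^'k"
  assumes pd: "\<And>x. x \<noteq> 0 \<Longrightarrow> 0 < x \<bullet> (W *v x)" and inj: "inj ((*v) X)" and J: "JW W X Y = 0"
  shows "QW W X Y t = (thetaW W X Y - t) \<bullet> ((transpose X ** W ** X) *v (thetaW W X Y - t))"
proof -
  obtain t0 where Y: "Y = X *v t0" using JW_eq_0_imp_in_range[OF pd J] by blast
  moreover have "thetaW W X Y = t0" using thetaW_fitted[OF pd inj] Y by simp
  moreover have "Y - X *v t = X *v (t0 - t)" by (simp add: Y matrix_vector_mult_diff_distrib)
  ultimately show ?thesis by (simp only: QW_def quadratic_form_transpose_mult)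
qed

lemma QW_bounds_thetaW:
  fixes X :: "real^'p^'k" and W :: "real^'k^'k"
  assumes pd: "\<And>x. x \<noteq> 0 \<Longrightarrow> 0 < x \<bullet> (W *v x)" and inj: "inj ((*v) X)" and J: "JW W X Y = 0"
  obtains m K where "0 < m" and "0 < K"
    and "\<And>t. m * (norm (t - thetaW W X Y))\<^sup>2 \<le> QW W X Y t"
    and "\<And>t. QW W X Y t \<le> K * (norm (t - thetaW W X Y))\<^sup>2"
proof -
  let ?M = "transpose X ** W ** X"
  obtain m where "0 < m" and m: "\<And>x. m * (x \<bullet> x) \<le> x \<bullet> (?M *v x)"
    using pos_def_quadratic_form_ge pos_def_transpose_mult[OF pd inj] by metis
  obtain K where "0 < K" and K: "\<And>x. x \<bullet> (?M *v x) \<le> K * (x \<bullet> x)"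
    using quadratic_form_le by blast
  show thesis
  proof (rule that[OF \<open>0 < m\<close> \<open>0 < K\<close>])
    fix t
    show "m * (norm (t - thetaW W X Y))\<^sup>2 \<le> QW W X Y t"
      using m[of "thetaW W X Y - t"]
      by (simp add: QW_eq_quadratic_form_thetaW[OF pd inj J] dot_square_norm norm_minus_commute)
    show "QW W X Y t \<le> K * (norm (t - thetaW W X Y))\<^sup>2"
      using K[of "thetaW W X Y - t"]
      by (simp add: QW_eq_quadratic_form_thetaW[OF pd inj J] dot_square_norm norm_minus_commute)
  qed
qed

lemma divide_le_power_diff:
  fixes a b C L x :: real
  assumes "0 \<le> a" "a \<le> C * x ^ n" "L * x ^ p \<le> b" "0 < L" "0 < x" "p \<le> n"
  shows "a / b \<le> C / L * x ^ (n - p)"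
proof -
  have "0 < L * x ^ p" using assms by simp
  moreover have "0 < b" using calculation assms(3) by linarith
  ultimately have "a / b \<le> a / (L * x ^ p)"
    using assms by (intro divide_left_mono) auto
  also have "\<dots> \<le> C * x ^ n / (L * x ^ p)" using assms by (intro divide_right_mono) auto
  also have "\<dots> = C / L * x ^ (n - p)"
    using assms by (simp add: power_diff field_simps)
  finally show ?thesis .
qed

locale elliptical_profile =
  fixes f :: "real \<Rightarrow> real" and W :: "real^'k^'k"
  assumes W_pd: "\<And>x. x \<noteq> 0 \<Longrightarrow> 0 < x \<bullet> (W *v x)"
    and f_cont: "continuous_on {0..} f"
    and f_pos: "\<And>u. 0 \<le> u \<Longrightarrow> 0 < f u"
    and f_noninc: "\<And>u v. 0 \<le> u \<Longrightarrow> u \<le> v \<Longrightarrow> f v \<le> f u"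
    and f_tail: "\<And>a. 1 < a \<Longrightarrow> ((\<lambda>u. f (a * u) / f u) \<longlongrightarrow> 0) at_top"
    and f_int: "(\<integral>\<^sup>+u. ennreal (f (u \<bullet> u)) \<partial>(lborel :: (real^'k) measure)) < \<infinity>"
begin

lemma W_psd: "0 \<le> x \<bullet> (W *v x)"
  using W_pd[of x] by (cases "x = 0") auto

lemma borel_measurable_f_comp:
  assumes "continuous_on UNIV g" and "\<And>x. 0 \<le> g x"
  shows "(\<lambda>x. f (g x)) \<in> borel_measurable borel"
  using assms by (intro borel_measurable_continuous_onI continuous_on_compose2[OF f_cont]) auto

lemma borel_measurable_f_quadratic_form:
  assumes "0 \<le> a"
  shows "(\<lambda>\<eta>. f (a * (\<eta> \<bullet> (W *v \<eta>)))) \<in> borel_measurable borel"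
  using assms W_psd
  by (intro borel_measurable_f_comp) (auto intro!: continuous_intros continuous_on_quadratic_form)

lemma Zc_eq_nn_integral:
  assumes "0 < c"
  shows "Zc f W c = enn2real (\<integral>\<^sup>+\<eta>. ennreal (f ((1 / c) * (\<eta> \<bullet> (W *v \<eta>)))) \<partial>lborel)"
  unfolding Zc_def using assms W_psd f_pos borel_measurable_f_quadratic_form[of "1 / c"]
  by (intro integral_eq_nn_integral AE_I2) (auto intro: less_imp_le)

lemma Zc_scale:
  assumes "0 < c"
  shows "Zc f W c = sqrt c ^ CARD('k) * Zc f W 1"
proof -
  have "(\<lambda>\<eta>. ennreal (f ((1 / c) * (\<eta> \<bullet> (W *v \<eta>))))) \<in> borel_measurable borel"
    using assms by (intro measurable_compose[OF borel_measurable_f_quadratic_form]) auto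
  note scale = nn_integral_lborel_scaleR[OF this, of "sqrt c"]
  have "f ((1 / c) * ((sqrt c *\<^sub>R \<eta>) \<bullet> (W *v (sqrt c *\<^sub>R \<eta>)))) = f (\<eta> \<bullet> (W *v \<eta>))" for \<eta>
    using assms by (simp add: matrix_vector_mult_scaleR mult.assoc[symmetric])
  then have "(\<integral>\<^sup>+\<eta>. ennreal (f ((1 / c) * (\<eta> \<bullet> (W *v \<eta>)))) \<partial>lborel)
      = ennreal (sqrt c ^ CARD('k)) * (\<integral>\<^sup>+\<eta>. ennreal (f (\<eta> \<bullet> (W *v \<eta>))) \<partial>lborel)"
    using scale assms by simp
  then show ?thesis using assms by (simp add: Zc_eq_nn_integral enn2real_mult)
qed

lemma nn_integral_f_quadratic_form_finite:
  "(\<integral>\<^sup>+\<eta>. ennreal (f (\<eta> \<bullet> (W *v \<eta>))) \<partial>lborel) < \<infinity>"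
proof -
  obtain l where l: "0 < l" "\<And>x. l * (x \<bullet> x) \<le> x \<bullet> (W *v x)"
    using pos_def_quadratic_form_ge[OF W_pd] by blast
  let ?L = "\<integral>\<^sup>+\<eta>. ennreal (f (l * (\<eta> \<bullet> \<eta>))) \<partial>(lborel :: (real^'k) measure)"
  have "(\<lambda>u::real^'k. ennreal (f (u \<bullet> u))) \<in> borel_measurable borel"
    by (intro measurable_compose[OF borel_measurable_f_comp]) (auto intro!: continuous_intros)
  from nn_integral_lborel_scaleR[OF this, of "sqrt l"] l(1)
  have "ennreal (sqrt l ^ CARD('k)) * ?L < \<infinity>"
    using f_int by (simp add: mult.assoc[symmetric])
  then have "?L < \<infinity>"
    using l(1) by (auto simp: ennreal_mult_less_top)
  moreover have "(\<integral>\<^sup>+\<eta>. ennreal (f (\<eta> \<bullet> (W *v \<eta>))) \<partial>lborel) \<le> ?L"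
    using l by (intro nn_integral_mono ennreal_leI f_noninc) auto
  ultimately show ?thesis by (rule le_less_trans[rotated])
qed

lemma Zc_1_pos: "0 < Zc f W 1"
proof -
  let ?I = "\<integral>\<^sup>+\<eta>. ennreal (f (\<eta> \<bullet> (W *v \<eta>))) \<partial>lborel"
  have "?I \<noteq> 0"
  proof
    assume "?I = 0"
    then have "AE \<eta> in lborel. f (\<eta> \<bullet> (W *v \<eta>)) = 0"
      using borel_measurable_f_quadratic_form[of 1] f_pos W_psd
      by (simp add: nn_integral_0_iff_AE less_imp_le)
    then have "AE \<eta> in (lborel :: (real^'k) measure). False"
      by (rule eventually_mono) (metis f_pos W_psd less_irrefl)
    then show False
      using ae_filter_eq_bot_iff[of "lborel :: (real^'k) measure"] by (simp add: trivial_limit_def)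
  qed
  then show ?thesis
    using Zc_eq_nn_integral[of 1] nn_integral_f_quadratic_form_finite
    by (simp add: enn2real_positive_iff zero_less_iff_neq_zero)
qed

lemma Zc_pos: "0 < c \<Longrightarrow> 0 < Zc f W c"
  using Zc_1_pos Zc_scale[of c] by simp

lemma profile_over_Zc_tendsto_0:
  assumes "0 < J"
  shows "((\<lambda>c. f (J / c) / Zc f W c) \<longlongrightarrow> 0) (at_right 0)"
proof -
  have "filterlim (\<lambda>c. J * inverse c) at_top (at_right (0::real))"
    by (rule filterlim_tendsto_pos_mult_at_top[OF tendsto_const assms filterlim_inverse_at_top_right])
  then have "((\<lambda>c. sqrt (J / c) ^ CARD('k) * f (J / c)) \<longlongrightarrow> 0) (at_right 0)"
    using filterlim_compose[OF sqrt_power_mult_profile_tendsto_0[OF f_noninc f_pos f_int f_tail]]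
    by (simp add: divide_inverse)
  then have "((\<lambda>c. sqrt (J / c) ^ CARD('k) * f (J / c) / (sqrt J ^ CARD('k) * Zc f W 1)) \<longlongrightarrow> 0) (at_right 0)"
    by (rule tendsto_divide_zero)
  moreover have "\<forall>\<^sub>F c in at_right 0. sqrt (J / c) ^ CARD('k) * f (J / c) / (sqrt J ^ CARD('k) * Zc f W 1)
      = f (J / c) / Zc f W c"
    using eventually_at_right_less[of "0::real"]
  proof eventually_elim
    case (elim c)
    then show ?case using Zc_scale[of c] assms by (simp add: real_sqrt_divide power_divide)
  qed
  ultimately show ?thesis by (rule Lim_transform_eventually)
qed

lemma f_div_le_sqrt_power:
  assumes "0 < q"
  obtains C where "\<And>c. 0 < c \<Longrightarrow> f (q / c) \<le> C * sqrt c ^ CARD('k)"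
proof -
  define V where "V = enn2real (\<integral>\<^sup>+u. ennreal (f (u \<bullet> u)) \<partial>(lborel :: (real^'k) measure)) / unit_ball_vol CARD('k)"
  have "f (q / c) \<le> V / sqrt q ^ CARD('k) * sqrt c ^ CARD('k)" if "0 < c" for c
  proof -
    have "sqrt (q / c) ^ CARD('k) * f (q / c) \<le> V"
      unfolding V_def using sqrt_power_mult_profile_le[OF f_noninc _ f_int] f_pos assms that
      by (simp add: less_imp_le)
    moreover have "sqrt (q / c) ^ CARD('k) = sqrt q ^ CARD('k) / sqrt c ^ CARD('k)"
      by (simp add: real_sqrt_divide power_divide)
    ultimately have "f (q / c) * sqrt q ^ CARD('k) \<le> V * sqrt c ^ CARD('k)"
      using that by (simp add: pos_divide_le_eq mult.commute)
    then show ?thesis using assms by (simp add: pos_le_divide_eq)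
  qed
  then show thesis by (rule that)
qed

end

locale gmm_mixture_posterior = elliptical_profile f W
  for f :: "real \<Rightarrow> real" and W :: "real^'k^'k" +
  fixes Y :: "real^'k" and X :: "real^'p^'k"
    and pistar :: "real^'p \<Rightarrow> real^'k \<Rightarrow> real" and pitheta :: "real^'p \<Rightarrow> real" and \<phi> :: real
  assumes pistar_pos: "\<And>\<theta> \<eta>. 0 < pistar \<theta> \<eta>"
    and phi: "0 < \<phi>" "\<phi> < 1"
    and pitheta_nonneg: "\<And>\<theta>. 0 \<le> pitheta \<theta>"
    and pitheta_meas: "pitheta \<in> borel_measurable lborel"
    and pitheta_dens: "(\<integral>\<^sup>+\<theta>. ennreal (pitheta \<theta>) \<partial>lborel) = 1"
    and star_post_wd: "integrable lborel (\<lambda>t. pitheta t * pistar t (Y - X *v t))"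
begin

abbreviation post :: "real \<Rightarrow> real^'p \<Rightarrow> real" where
  "post c \<equiv> post_c f W pistar \<phi> pitheta X Y c"

definition kernel_mass :: "real \<Rightarrow> real" where
  "kernel_mass c = (\<integral>t. pitheta t * f ((1 / c) * QW W X Y t) \<partial>lborel)"

definition star_mass :: real where
  "star_mass = (\<integral>t. pitheta t * pistar t (Y - X *v t) \<partial>lborel)"

lemma QW_nonneg: "0 \<le> QW W X Y t"
  unfolding QW_def by (rule W_psd)

lemma integrable_pitheta: "integrable lborel pitheta"
  using pitheta_meas pitheta_dens pitheta_nonneg by (intro integrableI_bounded) auto

lemma integral_pitheta: "(\<integral>t. pitheta t \<partial>lborel) = 1"
  using pitheta_meas pitheta_nonneg pitheta_dens by (subst integral_eq_nn_integral) auto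

lemma integrable_kernel:
  assumes "0 < c"
  shows "integrable lborel (\<lambda>t. pitheta t * f ((1 / c) * QW W X Y t))"
proof (rule Bochner_Integration.integrable_bound[of _ "\<lambda>t. f 0 * pitheta t"])
  show "integrable lborel (\<lambda>t. f 0 * pitheta t)" using integrable_pitheta by simp
  have "(\<lambda>t. f ((1 / c) * QW W X Y t)) \<in> borel_measurable borel"
    using assms QW_nonneg by (intro borel_measurable_f_comp) (auto intro!: continuous_intros continuous_on_QW)
  then show "(\<lambda>t. pitheta t * f ((1 / c) * QW W X Y t)) \<in> borel_measurable lborel"
    using pitheta_meas by measurable
  have "pitheta t * f ((1 / c) * QW W X Y t) \<le> f 0 * pitheta t" for t
    using f_noninc[of 0 "(1 / c) * QW W X Y t"] assms QW_nonneg[of t] pitheta_nonneg[of t]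
    by (simp add: mult.commute[of "f 0"] mult_left_mono)
  then show "AE t in lborel. norm (pitheta t * f ((1 / c) * QW W X Y t)) \<le> norm (f 0 * pitheta t)"
    using assms QW_nonneg pitheta_nonneg f_pos by (intro AE_I2) (simp add: less_imp_le)
qed

lemma kernel_mass_nonneg: "0 < c \<Longrightarrow> 0 \<le> kernel_mass c"
  unfolding kernel_mass_def using pitheta_nonneg f_pos QW_nonneg
  by (intro integral_nonneg_AE AE_I2) (simp add: less_imp_le)

lemma star_mass_pos: "0 < star_mass"
proof -
  have "star_mass \<noteq> 0"
  proof
    assume "star_mass = 0"
    then have "AE t in lborel. pitheta t * pistar t (Y - X *v t) = 0"
      unfolding star_mass_def using star_post_wd pitheta_nonneg pistar_pos
      by (subst (asm) integral_nonneg_eq_0_iff_AE) (auto intro!: AE_I2 mult_nonneg_nonneg simp: less_imp_le)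
    then have "AE t in lborel. ennreal (pitheta t) = 0"
      by (rule eventually_mono) (metis pistar_pos less_irrefl mult_eq_0_iff ennreal_0)
    then show False using pitheta_meas pitheta_dens by (simp add: nn_integral_0_iff_AE[symmetric])
  qed
  moreover have "0 \<le> star_mass"
    unfolding star_mass_def using pitheta_nonneg pistar_pos by (simp add: less_imp_le)
  ultimately show ?thesis by simp
qed

lemma post_c_eq:
  assumes "0 < c"
  shows "post c \<theta> = pitheta \<theta> * ((1 - \<phi>) * (f ((1 / c) * QW W X Y \<theta>) / Zc f W c) + \<phi> * pistar \<theta> (Y - X *v \<theta>))
                     / ((1 - \<phi>) * (kernel_mass c / Zc f W c) + \<phi> * star_mass)"
proof -
  have mix: "pitheta t * pi_eta_mix f W pistar \<phi> c t (Y - X *v t)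
      = (1 - \<phi>) / Zc f W c * (pitheta t * f ((1 / c) * QW W X Y t)) + \<phi> * (pitheta t * pistar t (Y - X *v t))" for t
    by (simp add: pi_eta_mix_def pi_eta_def QW_def algebra_simps)
  have "(\<integral>t. pitheta t * pi_eta_mix f W pistar \<phi> c t (Y - X *v t) \<partial>lborel)
      = (1 - \<phi>) * (kernel_mass c / Zc f W c) + \<phi> * star_mass"
    unfolding mix kernel_mass_def star_mass_def using integrable_kernel[OF assms] star_post_wd by simp
  then show ?thesis
    by (simp add: post_c_def posterior_def pi_eta_mix_def pi_eta_def QW_def)
qed

lemma post_c_nonneg:
  assumes "0 < c"
  shows "0 \<le> post c \<theta>"
  using assms phi pitheta_nonneg pistar_pos f_pos QW_nonneg Zc_pos kernel_mass_nonneg star_mass_pos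
  by (simp add: post_c_eq less_imp_le)

lemma f_kernel_le_JW:
  assumes "0 < c"
  shows "f ((1 / c) * QW W X Y t) \<le> f (JW W X Y / c)"
  using assms JW_nonneg[OF W_psd, of X Y] JW_le_QW[OF W_psd, of X Y t]
  by (intro f_noninc) (auto simp: divide_right_mono)

lemma kernel_mass_le_JW:
  assumes "0 < c"
  shows "kernel_mass c \<le> f (JW W X Y / c)"
proof -
  have "kernel_mass c \<le> (\<integral>t. f (JW W X Y / c) * pitheta t \<partial>lborel)"
    unfolding kernel_mass_def using integrable_kernel[OF assms] integrable_pitheta
    by (intro integral_mono)
       (use mult_left_mono[OF f_kernel_le_JW[OF assms] pitheta_nonneg] in \<open>auto simp: mult.commute\<close>)
  also have "\<dots> = f (JW W X Y / c)" by (simp add: integral_pitheta)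
  finally show ?thesis .
qed

lemma post_c_tendsto_posterior_star:
  assumes "0 < JW W X Y"
  shows "((\<lambda>c. post c \<theta>) \<longlongrightarrow> posterior pitheta pistar X Y \<theta>) (at_right 0)"
proof -
  let ?K = "\<lambda>c. f ((1 / c) * QW W X Y \<theta>)"
  let ?g = "\<lambda>a b. pitheta \<theta> * ((1 - \<phi>) * a + \<phi> * pistar \<theta> (Y - X *v \<theta>))
                     / ((1 - \<phi>) * b + \<phi> * star_mass)"
  note lim_JW = profile_over_Zc_tendsto_0[OF assms]
  have "((\<lambda>c. ?K c / Zc f W c) \<longlongrightarrow> 0) (at_right 0)"
  proof (rule Lim_null_comparison[OF _ lim_JW])
    show "\<forall>\<^sub>F c in at_right 0. norm (?K c / Zc f W c) \<le> f (JW W X Y / c) / Zc f W c"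
      using eventually_at_right_less[of "0::real"]
      by eventually_elim (use f_pos QW_nonneg Zc_pos f_kernel_le_JW in \<open>simp add: divide_right_mono less_imp_le\<close>)
  qed
  moreover have "((\<lambda>c. kernel_mass c / Zc f W c) \<longlongrightarrow> 0) (at_right 0)"
  proof (rule Lim_null_comparison[OF _ lim_JW])
    show "\<forall>\<^sub>F c in at_right 0. norm (kernel_mass c / Zc f W c) \<le> f (JW W X Y / c) / Zc f W c"
      using eventually_at_right_less[of "0::real"]
      by eventually_elim (use kernel_mass_nonneg Zc_pos kernel_mass_le_JW in \<open>simp add: divide_right_mono less_imp_le\<close>)
  qed
  ultimately have "((\<lambda>c. ?g (?K c / Zc f W c) (kernel_mass c / Zc f W c)) \<longlongrightarrow> ?g 0 0) (at_right 0)"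
    using phi star_mass_pos by (intro tendsto_intros) auto
  moreover have "\<forall>\<^sub>F c in at_right 0. ?g (?K c / Zc f W c) (kernel_mass c / Zc f W c) = post c \<theta>"
    using eventually_at_right_less[of "0::real"] by eventually_elim (simp add: post_c_eq)
  ultimately show ?thesis
    using phi by (simp add: Lim_transform_eventually posterior_def star_mass_def)
qed

lemma kernel_mass_ge_sqrt_power:
  assumes cont: "isCont pitheta t0" and pos: "0 < pitheta t0"
    and "0 \<le> M" and Q_le: "\<And>t. QW W X Y t \<le> M * (norm (t - t0))\<^sup>2"
  obtains L where "0 < L" and "\<forall>\<^sub>F c in at_right 0. L * sqrt c ^ CARD('p) \<le> kernel_mass c"
proof -
  define p0 where "p0 = pitheta t0 / 2"
  obtain \<delta> where "0 < \<delta>" and \<delta>: "\<And>t. dist t t0 < \<delta> \<Longrightarrow> dist (pitheta t) (pitheta t0) < p0"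
    using cont pos unfolding continuous_at_eps_delta p0_def by (metis half_gt_zero)
  have "p0 * f M * (unit_ball_vol DIM(real^'p) * sqrt c ^ DIM(real^'p)) \<le> kernel_mass c"
    if c: "0 < c" "c < \<delta>\<^sup>2" for c
    unfolding kernel_mass_def
  proof (rule integral_ge_ball[where c = t0])
    fix t assume "t \<in> ball t0 (sqrt c)"
    then have d: "dist t t0 < sqrt c" by (simp add: dist_commute)
    then have near: "dist t t0 < \<delta>"
      using real_less_lsqrt[OF less_imp_le[OF \<open>0 < \<delta>\<close>] c(2)] by linarith
    have "(norm (t - t0))\<^sup>2 \<le> (sqrt c)\<^sup>2" using d by (intro power_mono) (auto simp: dist_norm)
    then have "QW W X Y t \<le> M * c"
      using Q_le[of t] mult_left_mono[OF _ \<open>0 \<le> M\<close>] c by fastforce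
    then have "(1 / c) * QW W X Y t \<le> M" using c by (simp add: pos_divide_le_eq)
    then have "f M \<le> f ((1 / c) * QW W X Y t)" using c QW_nonneg by (intro f_noninc) auto
    moreover have "p0 \<le> pitheta t" using \<delta>[OF near] unfolding p0_def dist_real_def by linarith
    ultimately show "p0 * f M \<le> pitheta t * f ((1 / c) * QW W X Y t)"
      using pos f_pos \<open>0 \<le> M\<close> by (intro mult_mono) (auto simp: p0_def less_imp_le)
  qed (use integrable_kernel pitheta_nonneg f_pos QW_nonneg pos f_pos[OF \<open>0 \<le> M\<close>] c
         in \<open>auto simp: p0_def less_imp_le\<close>)
  moreover have "\<forall>\<^sub>F c in at_right 0. 0 < c \<and> c < \<delta>\<^sup>2"
    unfolding eventually_at_right_field using \<open>0 < \<delta>\<close> by (intro exI[of _ "\<delta>\<^sup>2"]) auto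
  ultimately have "\<forall>\<^sub>F c in at_right 0. p0 * f M * unit_ball_vol CARD('p) * sqrt c ^ CARD('p) \<le> kernel_mass c"
    by (auto elim!: eventually_mono simp: mult_ac)
  moreover have "0 < p0 * f M * unit_ball_vol CARD('p)"
    using pos f_pos[OF \<open>0 \<le> M\<close>] by (simp add: p0_def)
  ultimately show thesis using that by blast
qed

lemma tail_mass_le:
  assumes c: "0 < c" and A: "0 < kernel_mass c"
    and "0 \<le> q" and B: "\<And>t. t \<in> B \<Longrightarrow> q \<le> QW W X Y t"
  shows "(\<integral>\<theta>. indicator B \<theta> * post c \<theta> \<partial>lborel)
           \<le> (f (q / c) + \<phi> / (1 - \<phi>) * star_mass * Zc f W c) / kernel_mass c"
proof -
  define Z where "Z = Zc f W c"
  define D where "D = (1 - \<phi>) * (kernel_mass c / Z) + \<phi> * star_mass"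
  define g where "g t = pitheta t * ((1 - \<phi>) * (f (q / c) / Z) + \<phi> * pistar t (Y - X *v t)) / D" for t
  have g_eq: "g = (\<lambda>t. (1 - \<phi>) * (f (q / c) / Z) / D * pitheta t + \<phi> / D * (pitheta t * pistar t (Y - X *v t)))"
    by (auto simp: g_def fun_eq_iff add_divide_distrib algebra_simps)
  have "0 < Z" using Zc_pos[OF c] by (simp add: Z_def)
  have "(1 - \<phi>) * (kernel_mass c / Z) \<le> D" and "0 < D"
    using phi star_mass_pos A \<open>0 < Z\<close> by (auto simp: D_def intro!: add_pos_nonneg)
  have fq: "0 < f (q / c)" using \<open>0 \<le> q\<close> c by (intro f_pos) simp
  have g_nonneg: "0 \<le> g t" for t
    using pitheta_nonneg[of t] pistar_pos[of t] phi fq \<open>0 < Z\<close> \<open>0 < D\<close> by (simp add: g_def less_imp_le)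
  have "indicator B t * post c t \<le> g t" for t
  proof (cases "t \<in> B")
    case True
    then have "f ((1 / c) * QW W X Y t) \<le> f (q / c)"
      using B c \<open>0 \<le> q\<close> by (intro f_noninc) (auto simp: divide_right_mono)
    then have "post c t \<le> g t"
      unfolding post_c_eq[OF c] g_def D_def[symmetric] Z_def[symmetric]
      using phi pitheta_nonneg[of t] \<open>0 < Z\<close> \<open>0 < D\<close>
      by (intro divide_right_mono mult_left_mono add_right_mono) auto
    then show ?thesis using True by simp
  qed (simp add: g_nonneg)
  moreover have "integrable lborel g" unfolding g_eq using integrable_pitheta star_post_wd by simp
  ultimately have "(\<integral>\<theta>. indicator B \<theta> * post c \<theta> \<partial>lborel) \<le> integral\<^sup>L lborel g"
    using g_nonneg by (intro integral_mono')
  also have "integral\<^sup>L lborel g = ((1 - \<phi>) * (f (q / c) / Z) + \<phi> * star_mass) / D"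
    unfolding g_eq using integrable_pitheta star_post_wd
    by (simp add: integral_pitheta star_mass_def add_divide_distrib)
  also have "\<dots> \<le> ((1 - \<phi>) * (f (q / c) / Z) + \<phi> * star_mass) / ((1 - \<phi>) * (kernel_mass c / Z))"
    using phi fq star_mass_pos A \<open>0 < Z\<close> \<open>0 < D\<close> \<open>(1 - \<phi>) * (kernel_mass c / Z) \<le> D\<close>
    by (intro divide_left_mono) (auto intro!: add_nonneg_nonneg mult_pos_pos divide_pos_pos)
  also have "\<dots> = (f (q / c) + \<phi> / (1 - \<phi>) * star_mass * Zc f W c) / kernel_mass c"
    using phi A \<open>0 < Z\<close> by (simp add: Z_def field_simps)
  finally show ?thesis .
qed

lemma tail_mass_le_sqrt_power:
  assumes "CARD('p) \<le> CARD('k)" and "0 < q" and B: "\<And>t. t \<in> B \<Longrightarrow> q \<le> QW W X Y t"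
    and "0 < L" and L: "\<forall>\<^sub>F c in at_right 0. L * sqrt c ^ CARD('p) \<le> kernel_mass c"
  obtains C where "\<forall>\<^sub>F c in at_right 0.
    (\<integral>\<theta>. indicator B \<theta> * post c \<theta> \<partial>lborel) \<le> C * sqrt c ^ (CARD('k) - CARD('p))"
proof -
  obtain Cf where Cf: "\<And>c. 0 < c \<Longrightarrow> f (q / c) \<le> Cf * sqrt c ^ CARD('k)"
    using f_div_le_sqrt_power[OF \<open>0 < q\<close>] by blast
  define C where "C = Cf + \<phi> / (1 - \<phi>) * star_mass * Zc f W 1"
  have "\<forall>\<^sub>F c in at_right 0.
    (\<integral>\<theta>. indicator B \<theta> * post c \<theta> \<partial>lborel) \<le> C / L * sqrt c ^ (CARD('k) - CARD('p))"
    using L eventually_at_right_less[of "0::real"]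
  proof eventually_elim
    case (elim c)
    have "0 < L * sqrt c ^ CARD('p)" using elim \<open>0 < L\<close> by simp
    then have A: "0 < kernel_mass c" using elim by linarith
    have "f (q / c) \<le> Cf * sqrt c ^ CARD('k)" by (rule Cf[OF elim(2)])
    moreover have "\<phi> / (1 - \<phi>) * star_mass * Zc f W c = \<phi> / (1 - \<phi>) * star_mass * Zc f W 1 * sqrt c ^ CARD('k)"
      by (simp add: Zc_scale[OF elim(2)])
    ultimately have num_le: "f (q / c) + \<phi> / (1 - \<phi>) * star_mass * Zc f W c \<le> C * sqrt c ^ CARD('k)"
      unfolding C_def distrib_right by linarith
    have "(f (q / c) + \<phi> / (1 - \<phi>) * star_mass * Zc f W c) / kernel_mass c
        \<le> C / L * sqrt c ^ (CARD('k) - CARD('p))"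
    proof (rule divide_le_power_diff[OF _ num_le])
      show "0 \<le> f (q / c) + \<phi> / (1 - \<phi>) * star_mass * Zc f W c"
        using f_pos[of "q / c"] \<open>0 < q\<close> elim phi star_mass_pos Zc_pos[OF elim(2)]
        by (intro add_nonneg_nonneg mult_nonneg_nonneg) auto
    qed (use elim assms(1) \<open>0 < L\<close> in auto)
    then show ?case
      using tail_mass_le[OF elim(2) A less_imp_le[OF \<open>0 < q\<close>] B] by (rule order_trans[rotated])
  qed
  then show thesis by (rule that)
qed

lemma tail_mass_tendsto_0:
  assumes dims: "CARD('p) < CARD('k)" and inj: "inj ((*v) X)" and J: "JW W X Y = 0"
    and cont: "continuous_on UNIV pitheta" and pos: "0 < pitheta (thetaW W X Y)" and "0 < \<epsilon>"
  shows "((\<lambda>c. \<integral>\<theta>. indicator {\<theta>. \<epsilon> \<le> norm (\<theta> - thetaW W X Y)} \<theta> * post c \<theta> \<partial>lborel) \<longlongrightarrow> 0)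
           (at_right 0)"
proof -
  let ?B = "{\<theta>. \<epsilon> \<le> norm (\<theta> - thetaW W X Y)}" and ?d = "CARD('k) - CARD('p)"
  obtain m K where "0 < m" "0 < K" and m: "\<And>t. m * (norm (t - thetaW W X Y))\<^sup>2 \<le> QW W X Y t"
    and K: "\<And>t. QW W X Y t \<le> K * (norm (t - thetaW W X Y))\<^sup>2"
    using QW_bounds_thetaW[OF W_pd inj J] by blast
  obtain L where "0 < L" and L: "\<forall>\<^sub>F c in at_right 0. L * sqrt c ^ CARD('p) \<le> kernel_mass c"
    using kernel_mass_ge_sqrt_power[OF _ pos _ K] cont \<open>0 < K\<close>
    by (auto simp: continuous_on_eq_continuous_at)
  have tail: "m * \<epsilon>\<^sup>2 \<le> QW W X Y t" if "t \<in> ?B" for t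
  proof -
    have "\<epsilon>\<^sup>2 \<le> (norm (t - thetaW W X Y))\<^sup>2" using that \<open>0 < \<epsilon>\<close> by (simp add: power_mono)
    then show ?thesis using \<open>0 < m\<close> m[of t] by (meson mult_left_mono less_imp_le order_trans)
  qed
  have "0 < m * \<epsilon>\<^sup>2" using \<open>0 < m\<close> \<open>0 < \<epsilon>\<close> by simp
  then obtain C where C: "\<forall>\<^sub>F c in at_right 0. (\<integral>\<theta>. indicator ?B \<theta> * post c \<theta> \<partial>lborel) \<le> C * sqrt c ^ ?d"
    using tail_mass_le_sqrt_power[OF less_imp_le[OF dims] _ tail \<open>0 < L\<close> L] by blast
  show ?thesis
  proof (rule Lim_null_comparison)
    show "\<forall>\<^sub>F c in at_right 0. norm (\<integral>\<theta>. indicator ?B \<theta> * post c \<theta> \<partial>lborel) \<le> C * sqrt c ^ ?d"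
      using C eventually_at_right_less[of "0::real"]
      by eventually_elim (simp add: integral_nonneg post_c_nonneg)
    have "((\<lambda>c. sqrt c ^ ?d) \<longlongrightarrow> sqrt 0 ^ ?d) (at_right 0)"
      by (intro tendsto_intros tendsto_ident_at)
    moreover have "sqrt 0 ^ ?d = 0" using dims by simp
    ultimately show "((\<lambda>c. C * sqrt c ^ ?d) \<longlongrightarrow> 0) (at_right 0)"
      by (intro tendsto_mult_right_zero) (simp only:)
  qed
qed

end

theorem proposition4:
  fixes Y :: "real^'k" and X :: "real^'p^'k" and W :: "real^'k^'k"
    and f :: "real \<Rightarrow> real"
    and pistar :: "real^'p \<Rightarrow> real^'k \<Rightarrow> real"
    and pitheta :: "real^'p \<Rightarrow> real"
    and \<phi> :: real
  assumes dims: "CARD('p) < CARD('k)"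
    and X_rank: "rank X = CARD('p)"
    and W_sym: "transpose W = W"
    and W_pd: "\<And>x. x \<noteq> 0 \<Longrightarrow> x \<bullet> (W *v x) > 0"
    and f_cont: "continuous_on {0..} f"
    and f_pos: "\<And>u. u \<ge> 0 \<Longrightarrow> f u > 0"
    and f_noninc: "\<And>u v. 0 \<le> u \<Longrightarrow> u \<le> v \<Longrightarrow> f v \<le> f u"
    and f_tail: "\<And>a. a > 1 \<Longrightarrow> ((\<lambda>u. f (a * u) / f u) \<longlongrightarrow> 0) at_top"
    and f_int: "(\<integral>\<^sup>+ u. ennreal (f (u \<bullet> u)) \<partial>(lborel :: (real^'k) measure)) < \<infinity>"
    and pistar_pos: "\<And>\<theta> \<eta>. pistar \<theta> \<eta> > 0"
    and pistar_meas: "\<And>\<theta>. pistar \<theta> \<in> borel_measurable lborel"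
    and pistar_dens: "\<And>\<theta>. (\<integral>\<^sup>+ \<eta>. ennreal (pistar \<theta> \<eta>) \<partial>lborel) = 1"
    and phi: "0 < \<phi>" "\<phi> < 1"
    and pitheta_nonneg: "\<And>\<theta>. pitheta \<theta> \<ge> 0"
    and pitheta_meas: "pitheta \<in> borel_measurable lborel"
    and pitheta_dens: "(\<integral>\<^sup>+ \<theta>. ennreal (pitheta \<theta>) \<partial>lborel) = 1"
    and star_post_wd: "integrable lborel (\<lambda>t. pitheta t * pistar t (Y - X *v t))"
  shows
    "(JW W X Y > 0 \<longrightarrow>
        (\<forall>\<theta>. ((\<lambda>c. post_c f W pistar \<phi> pitheta X Y c \<theta>)
                 \<longlongrightarrow> posterior pitheta pistar X Y \<theta>) (at_right 0)))
     \<and> (JW W X Y = 0 \<and> continuous_on UNIV pitheta \<and> pitheta (thetaW W X Y) > 0 \<longrightarrow>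
        (\<forall>\<epsilon>>0. ((\<lambda>c. \<integral>\<theta>. indicator {\<theta>. norm (\<theta> - thetaW W X Y) \<ge> \<epsilon>} \<theta>
                                * post_c f W pistar \<phi> pitheta X Y c \<theta> \<partial>lborel)
                 \<longlongrightarrow> 0) (at_right 0)))"
proof -
  interpret gmm_mixture_posterior f W Y X pistar pitheta \<phi>
    by unfold_locales
       (use W_pd f_cont f_pos f_noninc f_tail f_int pistar_pos phi pitheta_nonneg pitheta_meas
            pitheta_dens star_post_wd in auto)
  have "inj ((*v) X)" using X_rank by (simp add: full_rank_injective)
  then show ?thesis
    using post_c_tendsto_posterior_star tail_mass_tendsto_0[OF dims] by blast
qed

end
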